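(* If $n,m\ge 2$, then the LC orbit of the complete bipartite graph $K_{n,m}$ has size $|\mathcal{O}(K_{n,m})|=nm+n+m+3$.
   Context: For a graph $G$ and vertex $v$, the local complement $c_v(G)$ is the graph on $V(G)$ obtained by complementing the edges among the neighbours of $v$. $\mathcal{O}(G)$ is the set of all graphs on the labelled vertex set $V(G)$ obtainable from $G$ by finite sequences of local complements; graphs are labelled, so isomorphic but distinct graphs are counted separately. *)

theory Defs
  imports Main
begin

text \<open>A simple graph on a labelled vertex set V is represented by its edge set,
  a set of 2-element subsets of V.\<close>

definition nbrs :: "'a set set \<Rightarrow> 'a \<Rightarrow> 'a set" where
  "nbrs E v = {u. u \<noteq> v \<and> {u, v} \<in> E}"

definition local_comp :: "'a set set \<Rightarrow> 'a \<Rightarrow> 'a set set" where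
  "local_comp E v =
     (let P = {{x, y} | x y. x \<in> nbrs E v \<and> y \<in> nbrs E v \<and> x \<noteq> y}
      in (E - P) \<union> (P - E))"

inductive_set lc_orbit :: "'a set \<Rightarrow> 'a set set \<Rightarrow> 'a set set set"
  for V :: "'a set" and E :: "'a set set" where
  base: "E \<in> lc_orbit V E"
| step: "G \<in> lc_orbit V E \<Longrightarrow> v \<in> V \<Longrightarrow> local_comp G v \<in> lc_orbit V E"

definition complete_bipartite :: "'a set \<Rightarrow> 'a set \<Rightarrow> 'a set set" where
  "complete_bipartite A B = {{a, b} | a b. a \<in> A \<and> b \<in> B}"

end

theory Submission
  imports Defs
begin

text \<open>Write K for the complete bipartite graph on the parts A and B. Local complementation
  at a vertex of one part turns the other part into a clique. Continuing, one finds that the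
  orbit of K consists of K itself; the two graphs obtained from K by adding a clique on one
  part; for each vertex c, the graph in which c is adjacent to all other vertices and the part
  not containing c is a clique; and for each a \<in> A, b \<in> B, the double star with adjacent
  centres a and b and leaves A - {a} and B - {b}. This family is closed under local
  complementation and every member is reached, so it is the orbit. Its members are pairwise
  distinct as soon as both parts have two vertices: the edges between A and B are all pairs,
  the pairs through c, or the single pair ab, and the first three graphs differ inside A or B.\<close>

text \<open>Graphs are described by an adjacency predicate, symmetrised by graph_of. Local
  complementation then acts pointwise on the predicate (local_comp_graph_of), so every
  local complement computed below is a propositional identity.\<close>

definition graph_of :: "('a \<Rightarrow> 'a \<Rightarrow> bool) \<Rightarrow> 'a set set" where
  "graph_of R = {{x, y} | x y. x \<noteq> y \<and> (R x y \<or> R y x)}"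

lemma doubleton_in_graph_of: "{x, y} \<in> graph_of R \<longleftrightarrow> x \<noteq> y \<and> (R x y \<or> R y x)"
  unfolding graph_of_def by (auto simp: doubleton_eq_iff)

lemma graph_of_eqI:
  assumes "\<And>x y. x \<noteq> y \<Longrightarrow> (R x y \<or> R y x) \<longleftrightarrow> (S x y \<or> S y x)"
  shows "graph_of R = graph_of S"
  using assms unfolding graph_of_def by blast

lemma nbrs_graph_of: "nbrs (graph_of R) v = {u. u \<noteq> v \<and> (R u v \<or> R v u)}"
  unfolding nbrs_def by (auto simp: doubleton_in_graph_of)

lemma local_comp_graph_of:
  "local_comp (graph_of R) v = graph_of (\<lambda>x y. (R x y \<or> R y x) \<noteq>
     (x \<noteq> v \<and> y \<noteq> v \<and> (R x v \<or> R v x) \<and> (R y v \<or> R v y)))"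
    (is "_ = graph_of ?R'")
proof (rule set_eqI)
  have clique: "{{x, y} | x y. x \<in> N \<and> y \<in> N \<and> x \<noteq> y} =
      graph_of (\<lambda>x y. x \<in> N \<and> y \<in> N)" for N :: "'a set"
    unfolding graph_of_def by blast
  fix e
  show "e \<in> local_comp (graph_of R) v \<longleftrightarrow> e \<in> graph_of ?R'"
  proof (cases "\<exists>x y. e = {x, y} \<and> x \<noteq> y")
    case True
    then obtain x y where "e = {x, y}" "x \<noteq> y" by blast
    then show ?thesis
      unfolding local_comp_def Let_def clique
      by (simp only: Un_iff Diff_iff doubleton_in_graph_of nbrs_graph_of mem_Collect_eq) blast
  next
    case False
    then show ?thesis
      unfolding local_comp_def Let_def clique graph_of_def by blast
  qed
qed

definition split_graph :: "'a set \<Rightarrow> 'a set \<Rightarrow> 'a set set" where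
  "split_graph C I = graph_of (\<lambda>x y. x \<in> C \<and> (y \<in> C \<or> y \<in> I))"

definition cone_graph :: "'a \<Rightarrow> 'a set \<Rightarrow> 'a set \<Rightarrow> 'a set set" where
  "cone_graph a A B = graph_of (\<lambda>x y. x = a \<and> (y \<in> A \<or> y \<in> B) \<or> x \<in> B \<and> y \<in> B)"

definition double_star :: "'a \<Rightarrow> 'a \<Rightarrow> 'a set \<Rightarrow> 'a set \<Rightarrow> 'a set set" where
  "double_star a b A B = graph_of (\<lambda>x y. x = a \<and> (y = b \<or> y \<in> A) \<or> x = b \<and> y \<in> B)"

definition cone_graphs :: "'a set \<Rightarrow> 'a set \<Rightarrow> 'a set set set" where
  "cone_graphs A B = (\<lambda>a. cone_graph a A B) ` A"

definition double_stars :: "'a set \<Rightarrow> 'a set \<Rightarrow> 'a set set set" where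
  "double_stars A B = (\<lambda>(a, b). double_star a b A B) ` (A \<times> B)"

definition biclique_graphs :: "'a set \<Rightarrow> 'a set \<Rightarrow> 'a set set set" where
  "biclique_graphs A B = {complete_bipartite A B, split_graph A B, split_graph B A}"

definition bip_orbit :: "'a set \<Rightarrow> 'a set \<Rightarrow> 'a set set set" where
  "bip_orbit A B =
     biclique_graphs A B \<union> cone_graphs A B \<union> cone_graphs B A \<union> double_stars A B"

lemma complete_bipartite_commute: "complete_bipartite A B = complete_bipartite B A"
  unfolding complete_bipartite_def by (auto simp: insert_commute)

lemma double_star_commute: "double_star a b A B = double_star b a B A"
  unfolding double_star_def by (rule graph_of_eqI) blast

lemma double_stars_commute: "double_stars A B = double_stars B A"
  unfolding double_stars_def by (auto simp: double_star_commute intro!: rev_image_eqI)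

lemma biclique_graphs_commute: "biclique_graphs A B = biclique_graphs B A"
  unfolding biclique_graphs_def complete_bipartite_commute[of A B] by blast

lemma bip_orbit_commute: "bip_orbit A B = bip_orbit B A"
  unfolding bip_orbit_def biclique_graphs_commute[of A B] double_stars_commute[of A B] by blast

lemma complete_bipartite_eq_graph_of:
  assumes "A \<inter> B = {}"
  shows "complete_bipartite A B = graph_of (\<lambda>x y. x \<in> A \<and> y \<in> B)"
  using assms unfolding complete_bipartite_def graph_of_def by (auto simp: insert_commute) blast

lemma local_comp_complete_bipartite:
  assumes "A \<inter> B = {}" "a \<in> A"
  shows "local_comp (complete_bipartite A B) a = split_graph B A"
  unfolding complete_bipartite_eq_graph_of[OF assms(1)] split_graph_def local_comp_graph_of
  by (rule graph_of_eqI) (use assms in \<open>smt (verit) disjoint_iff\<close>)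

lemma local_comp_split_graph_clique:
  assumes "A \<inter> B = {}" "a \<in> A"
  shows "local_comp (split_graph A B) a = cone_graph a A B"
  unfolding cone_graph_def split_graph_def local_comp_graph_of
  by (rule graph_of_eqI) (use assms in \<open>smt (verit) disjoint_iff\<close>)

lemma local_comp_split_graph_indep:
  assumes "A \<inter> B = {}" "b \<in> B"
  shows "local_comp (split_graph A B) b = complete_bipartite A B"
  unfolding complete_bipartite_eq_graph_of[OF assms(1)] split_graph_def local_comp_graph_of
  by (rule graph_of_eqI) (use assms in \<open>smt (verit) disjoint_iff\<close>)

lemma local_comp_cone_graph_apex:
  assumes "A \<inter> B = {}" "a \<in> A"
  shows "local_comp (cone_graph a A B) a = split_graph A B"
  unfolding cone_graph_def split_graph_def local_comp_graph_of
  by (rule graph_of_eqI) (use assms in \<open>smt (verit) disjoint_iff\<close>)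

lemma local_comp_cone_graph_leaf:
  assumes "A \<inter> B = {}" "a \<in> A" "a' \<in> A" "a' \<noteq> a"
  shows "local_comp (cone_graph a A B) a' = cone_graph a A B"
  unfolding cone_graph_def local_comp_graph_of
  by (rule graph_of_eqI) (use assms in \<open>smt (verit) disjoint_iff\<close>)

lemma local_comp_cone_graph_clique:
  assumes "A \<inter> B = {}" "a \<in> A" "b \<in> B"
  shows "local_comp (cone_graph a A B) b = double_star a b A B"
  unfolding cone_graph_def double_star_def local_comp_graph_of
  by (rule graph_of_eqI) (use assms in \<open>smt (verit) disjoint_iff\<close>)

lemma local_comp_double_star_centre:
  assumes "A \<inter> B = {}" "a \<in> A" "b \<in> B"
  shows "local_comp (double_star a b A B) b = cone_graph a A B"
  unfolding cone_graph_def double_star_def local_comp_graph_of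
  by (rule graph_of_eqI) (use assms in \<open>smt (verit) disjoint_iff\<close>)

lemma local_comp_double_star_leaf:
  assumes "A \<inter> B = {}" "a \<in> A" "b \<in> B" "v \<noteq> a" "v \<noteq> b"
  shows "local_comp (double_star a b A B) v = double_star a b A B"
  unfolding double_star_def local_comp_graph_of
  by (rule graph_of_eqI) (use assms in \<open>smt (verit) disjoint_iff\<close>)

lemma local_comp_bip_orbit_left:
  assumes disjoint: "A \<inter> B = {}" and G: "G \<in> bip_orbit A B" and v: "v \<in> A"
  shows "local_comp G v \<in> bip_orbit A B"
proof -
  have disjoint': "B \<inter> A = {}" using disjoint by blast
  note orbit_defs = bip_orbit_def biclique_graphs_def cone_graphs_def double_stars_def
  from G consider
      "G = complete_bipartite A B" | "G = split_graph A B" | "G = split_graph B A"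
    | a where "a \<in> A" "G = cone_graph a A B" | b where "b \<in> B" "G = cone_graph b B A"
    | a b where "a \<in> A" "b \<in> B" "G = double_star a b A B"
    unfolding orbit_defs by blast
  then show ?thesis
  proof cases
    case 1
    then show ?thesis using local_comp_complete_bipartite[OF disjoint v]
      unfolding orbit_defs by simp
  next
    case 2
    then show ?thesis using local_comp_split_graph_clique[OF disjoint v] v
      unfolding orbit_defs by simp
  next
    case 3
    then show ?thesis using local_comp_split_graph_indep[OF disjoint' v]
      unfolding orbit_defs by (simp add: complete_bipartite_commute)
  next
    case (4 a)
    then show ?thesis
      using local_comp_cone_graph_apex[OF disjoint] local_comp_cone_graph_leaf[OF disjoint _ v]
        v
      unfolding orbit_defs by (cases "v = a") auto
  next
    case (5 b)
    then show ?thesis using local_comp_cone_graph_clique[OF disjoint' _ v] v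
      unfolding orbit_defs by (auto simp: double_star_commute[of b v])
  next
    case (6 a b)
    show ?thesis
    proof (cases "v = a")
      case True
      have "local_comp G v = cone_graph b B A"
        using 6 True local_comp_double_star_centre[OF disjoint' \<open>b \<in> B\<close> \<open>a \<in> A\<close>]
        by (simp add: double_star_commute[of a b])
      then show ?thesis using \<open>b \<in> B\<close> unfolding orbit_defs by blast
    next
      case False
      moreover have "v \<noteq> b" using v \<open>b \<in> B\<close> disjoint by blast
      ultimately show ?thesis
        using 6 local_comp_double_star_leaf[OF disjoint] unfolding orbit_defs by auto
    qed
  qed
qed

lemma local_comp_bip_orbit:
  assumes "A \<inter> B = {}" "G \<in> bip_orbit A B" "v \<in> A \<union> B"
  shows "local_comp G v \<in> bip_orbit A B"
proof -
  have "B \<inter> A = {}" using assms(1) by blast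
  then show ?thesis
    using assms local_comp_bip_orbit_left[of A B] local_comp_bip_orbit_left[of B A]
      bip_orbit_commute[of B A]
    by auto
qed

lemma lc_orbit_subsetI:
  assumes "E \<in> F" and "\<And>G v. G \<in> F \<Longrightarrow> v \<in> V \<Longrightarrow> local_comp G v \<in> F"
  shows "lc_orbit V E \<subseteq> F"
proof
  fix G assume "G \<in> lc_orbit V E"
  then show "G \<in> F" by induction (use assms in blast)+
qed

lemma lc_orbit_complete_bipartite:
  assumes disjoint: "A \<inter> B = {}" and "A \<noteq> {}" "B \<noteq> {}"
  shows "lc_orbit (A \<union> B) (complete_bipartite A B) = bip_orbit A B"
proof (rule antisym)
  show "lc_orbit (A \<union> B) (complete_bipartite A B) \<subseteq> bip_orbit A B"
    by (rule lc_orbit_subsetI)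
      (use local_comp_bip_orbit[OF disjoint] in \<open>auto simp: bip_orbit_def biclique_graphs_def\<close>)
next
  let ?O = "lc_orbit (A \<union> B) (complete_bipartite A B)"
  have disjoint': "B \<inter> A = {}" using disjoint by blast
  obtain a0 b0 where a0: "a0 \<in> A" and b0: "b0 \<in> B" using assms by blast
  have bip: "complete_bipartite A B \<in> ?O"
    by (rule lc_orbit.base)
  have split_A: "split_graph A B \<in> ?O"
    using lc_orbit.step[OF bip, of b0] b0 local_comp_complete_bipartite[OF disjoint' b0]
    by (simp add: complete_bipartite_commute)
  have split_B: "split_graph B A \<in> ?O"
    using lc_orbit.step[OF bip, of a0] a0 local_comp_complete_bipartite[OF disjoint a0] by simp
  have cone_A: "cone_graph a A B \<in> ?O" if "a \<in> A" for a
    using lc_orbit.step[OF split_A, of a] that local_comp_split_graph_clique[OF disjoint that]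
    by simp
  have cone_B: "cone_graph b B A \<in> ?O" if "b \<in> B" for b
    using lc_orbit.step[OF split_B, of b] that local_comp_split_graph_clique[OF disjoint' that]
    by simp
  have double: "double_star a b A B \<in> ?O" if "a \<in> A" "b \<in> B" for a b
    using lc_orbit.step[OF cone_A[OF that(1)], of b] that
      local_comp_cone_graph_clique[OF disjoint that]
    by simp
  show "bip_orbit A B \<subseteq> ?O"
    unfolding bip_orbit_def biclique_graphs_def cone_graphs_def double_stars_def
    using bip split_A split_B cone_A cone_B double by auto
qed

lemma cross_edge_in_bip_orbit_graphs:
  assumes "A \<inter> B = {}" "x \<in> A" "y \<in> B"
  shows "{x, y} \<in> complete_bipartite A B"
    and "{x, y} \<in> split_graph A B"
    and "{x, y} \<in> split_graph B A"
    and "{x, y} \<in> cone_graph c A B \<longleftrightarrow> x = c \<or> y = c"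
    and "{x, y} \<in> cone_graph c B A \<longleftrightarrow> x = c \<or> y = c"
    and "{x, y} \<in> double_star a b A B \<longleftrightarrow> x = a \<and> y = b \<or> x = b \<or> y = a"
  using assms
  by (auto simp: complete_bipartite_eq_graph_of split_graph_def cone_graph_def double_star_def
      doubleton_in_graph_of)

lemma inner_edge_in_bip_orbit_graphs:
  assumes "A \<inter> B = {}" "x \<in> A" "x' \<in> A" "x \<noteq> x'"
  shows "{x, x'} \<notin> complete_bipartite A B"
    and "{x, x'} \<in> split_graph A B"
    and "{x, x'} \<notin> split_graph B A"
  using assms
  by (auto simp: complete_bipartite_eq_graph_of split_graph_def doubleton_in_graph_of)

lemma inj_on_cone_graph:
  assumes disjoint: "A \<inter> B = {}" and b: "b \<in> B"
  shows "inj_on (\<lambda>a. cone_graph a A B) A"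
proof (rule inj_onI)
  fix a a' assume a: "a \<in> A" "a' \<in> A" and eq: "cone_graph a A B = cone_graph a' A B"
  have "{a, b} \<in> cone_graph a A B"
    using cross_edge_in_bip_orbit_graphs(4)[OF disjoint a(1) b] by simp
  then have "a = a' \<or> b = a'"
    using cross_edge_in_bip_orbit_graphs(4)[OF disjoint a(1) b] eq by simp
  moreover have "b \<noteq> a'" using disjoint a b by blast
  ultimately show "a = a'" by blast
qed

lemma inj_on_double_star:
  assumes disjoint: "A \<inter> B = {}"
  shows "inj_on (\<lambda>(a, b). double_star a b A B) (A \<times> B)"
proof (rule inj_onI, clarsimp)
  fix a b a' b' assume ab: "a \<in> A" "b \<in> B" "a' \<in> A" "b' \<in> B"
    and eq: "double_star a b A B = double_star a' b' A B"
  have "{a, b} \<in> double_star a b A B"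
    using cross_edge_in_bip_orbit_graphs(6)[OF disjoint ab(1,2)] by simp
  then have "a = a' \<and> b = b' \<or> a = b' \<or> b = a'"
    using cross_edge_in_bip_orbit_graphs(6)[OF disjoint ab(1,2)] eq by simp
  moreover have "a \<noteq> b'" "b \<noteq> a'" using disjoint ab by blast+
  ultimately show "a = a' \<and> b = b'" by blast
qed

lemma card_ge_2_ex_other:
  assumes "2 \<le> card X"
  shows "\<exists>y\<in>X. y \<noteq> x"
proof -
  have "finite X" using assms card.infinite by force
  then obtain y z where "y \<in> X" "z \<in> X" "y \<noteq> z"
    using assms card_le_Suc0_iff_eq[of X] by auto
  then show ?thesis by (cases "x = y") auto
qed

lemma card_cone_graphs:
  assumes "A \<inter> B = {}" "B \<noteq> {}"
  shows "card (cone_graphs A B) = card A"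
proof -
  obtain b where "b \<in> B" using assms(2) by blast
  then show ?thesis
    unfolding cone_graphs_def using card_image inj_on_cone_graph[OF assms(1)] by blast
qed

lemma card_double_stars:
  assumes "A \<inter> B = {}"
  shows "card (double_stars A B) = card A * card B"
  using card_image[OF inj_on_double_star[OF assms]] unfolding double_stars_def
  by (simp add: card_cartesian_product)

lemma card_biclique_graphs:
  assumes disjoint: "A \<inter> B = {}" and "2 \<le> card A" "2 \<le> card B"
  shows "card (biclique_graphs A B) = 3"
proof -
  obtain a a' where a: "a \<in> A" "a' \<in> A" "a \<noteq> a'"
    using card_ge_2_ex_other[OF assms(2)] by metis
  obtain b b' where b: "b \<in> B" "b' \<in> B" "b \<noteq> b'"
    using card_ge_2_ex_other[OF assms(3)] by metis
  have "B \<inter> A = {}" using disjoint by blast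
  have "complete_bipartite A B \<noteq> split_graph A B" "split_graph A B \<noteq> split_graph B A"
    using inner_edge_in_bip_orbit_graphs[OF disjoint a] by auto
  moreover have "complete_bipartite A B \<noteq> split_graph B A"
    using inner_edge_in_bip_orbit_graphs[OF \<open>B \<inter> A = {}\<close> b] complete_bipartite_commute[of A B]
    by auto
  ultimately show ?thesis unfolding biclique_graphs_def by simp
qed

lemma biclique_graphs_disjoint_cone_graphs:
  assumes disjoint: "A \<inter> B = {}" and "2 \<le> card A" "B \<noteq> {}"
  shows "biclique_graphs A B \<inter> cone_graphs A B = {}"
proof -
  obtain b where b: "b \<in> B" using assms(3) by blast
  have "cone_graph a A B \<notin> biclique_graphs A B" if a: "a \<in> A" for a
  proof -
    obtain a' where a': "a' \<in> A" "a' \<noteq> a" using card_ge_2_ex_other[OF assms(2)] by blast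
    have "b \<noteq> a" using disjoint a b by blast
    then have "{a', b} \<notin> cone_graph a A B"
      using cross_edge_in_bip_orbit_graphs(4)[OF disjoint a'(1) b] a'(2) by simp
    then show ?thesis
      using cross_edge_in_bip_orbit_graphs(1-3)[OF disjoint a'(1) b]
      unfolding biclique_graphs_def by blast
  qed
  then show ?thesis unfolding cone_graphs_def by blast
qed

lemma cone_graphs_disjoint:
  assumes disjoint: "A \<inter> B = {}" and "2 \<le> card B"
  shows "cone_graphs A B \<inter> cone_graphs B A = {}"
proof -
  have "cone_graph a A B \<noteq> cone_graph b B A" if a: "a \<in> A" and b: "b \<in> B" for a b
  proof -
    obtain b' where b': "b' \<in> B" "b' \<noteq> b" using card_ge_2_ex_other[OF assms(2)] by blast
    have "a \<noteq> b" using disjoint a b by blast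
    then have "{a, b'} \<in> cone_graph a A B" "{a, b'} \<notin> cone_graph b B A"
      using cross_edge_in_bip_orbit_graphs(4,5)[OF disjoint a b'(1)] b'(2) by simp_all
    then show ?thesis by blast
  qed
  then show ?thesis unfolding cone_graphs_def by blast
qed

lemma biclique_graphs_disjoint_double_stars:
  assumes disjoint: "A \<inter> B = {}" and "2 \<le> card A"
  shows "biclique_graphs A B \<inter> double_stars A B = {}"
proof -
  have "double_star a b A B \<notin> biclique_graphs A B" if a: "a \<in> A" and b: "b \<in> B" for a b
  proof -
    obtain a' where a': "a' \<in> A" "a' \<noteq> a" using card_ge_2_ex_other[OF assms(2)] by blast
    have "a' \<noteq> b" "b \<noteq> a" using disjoint a a'(1) b by blast+
    then have "{a', b} \<notin> double_star a b A B"
      using cross_edge_in_bip_orbit_graphs(6)[OF disjoint a'(1) b] a'(2) by simp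
    then show ?thesis
      using cross_edge_in_bip_orbit_graphs(1-3)[OF disjoint a'(1) b]
      unfolding biclique_graphs_def by blast
  qed
  then show ?thesis unfolding double_stars_def by auto
qed

lemma cone_graphs_disjoint_double_stars:
  assumes disjoint: "A \<inter> B = {}" and "2 \<le> card B"
  shows "cone_graphs A B \<inter> double_stars A B = {}"
proof -
  have "cone_graph c A B \<noteq> double_star a b A B" if c: "c \<in> A" and a: "a \<in> A" and b: "b \<in> B"
    for a b c
  proof -
    obtain b' where b': "b' \<in> B" "b' \<noteq> b" using card_ge_2_ex_other[OF assms(2)] by blast
    have "c \<noteq> b" "b' \<noteq> a" using disjoint a b b'(1) c by blast+
    then have "{c, b'} \<in> cone_graph c A B" "{c, b'} \<notin> double_star a b A B"
      using cross_edge_in_bip_orbit_graphs(4,6)[OF disjoint c b'(1)] b'(2) by simp_all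
    then show ?thesis by blast
  qed
  then show ?thesis unfolding cone_graphs_def double_stars_def by auto
qed

lemma card_bip_orbit:
  assumes "finite A" "finite B" and disjoint: "A \<inter> B = {}" and "2 \<le> card A" "2 \<le> card B"
  shows "card (bip_orbit A B) = card A * card B + card A + card B + 3"
proof -
  have disjoint': "B \<inter> A = {}" using disjoint by blast
  have "A \<noteq> {}" "B \<noteq> {}" using assms(4,5) by auto
  have "biclique_graphs A B \<inter> cone_graphs A B = {}"
    using biclique_graphs_disjoint_cone_graphs[OF disjoint assms(4) \<open>B \<noteq> {}\<close>] .
  moreover have "(biclique_graphs A B \<union> cone_graphs A B) \<inter> cone_graphs B A = {}"
    using biclique_graphs_disjoint_cone_graphs[OF disjoint' assms(5) \<open>A \<noteq> {}\<close>]
      cone_graphs_disjoint[OF disjoint assms(5)] biclique_graphs_commute[of A B]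
    by blast
  moreover have
    "(biclique_graphs A B \<union> cone_graphs A B \<union> cone_graphs B A) \<inter> double_stars A B = {}"
    using biclique_graphs_disjoint_double_stars[OF disjoint assms(4)]
      cone_graphs_disjoint_double_stars[OF disjoint assms(5)]
      cone_graphs_disjoint_double_stars[OF disjoint' assms(4)] double_stars_commute[of A B]
    by blast
  moreover have "finite (biclique_graphs A B)" "finite (cone_graphs A B)"
      "finite (cone_graphs B A)" "finite (double_stars A B)"
    using assms(1,2) unfolding biclique_graphs_def cone_graphs_def double_stars_def by simp_all
  ultimately have "card (bip_orbit A B) = card (biclique_graphs A B) + card (cone_graphs A B)
      + card (cone_graphs B A) + card (double_stars A B)"
    unfolding bip_orbit_def by (simp add: card_Un_disjoint)
  then show ?thesis
    using card_biclique_graphs[OF disjoint assms(4,5)] card_cone_graphs[OF disjoint \<open>B \<noteq> {}\<close>]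
      card_cone_graphs[OF disjoint' \<open>A \<noteq> {}\<close>] card_double_stars[OF disjoint]
    by simp
qed

theorem theorem4:
  fixes A B :: "'a set" and n m :: nat
  assumes "finite A" "finite B" "A \<inter> B = {}"
    and "card A = n" "card B = m" "n \<ge> 2" "m \<ge> 2"
  shows "card (lc_orbit (A \<union> B) (complete_bipartite A B)) = n * m + n + m + 3"
proof -
  have "A \<noteq> {}" "B \<noteq> {}" using assms(4-7) by auto
  then show ?thesis
    using lc_orbit_complete_bipartite[OF assms(3)] card_bip_orbit[OF assms(1-3)] assms(4-7)
    by simp
qed

end
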